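(* Let $E$ be a nonzero reflexive real Banach space, $S,T\colon E\rightrightarrows E^*$ be maximally monotone, and suppose $\mathrm{dom}\,\varphi_S+\rho_1\mathrm{dom}\,\varphi_T=E\times E^*$. Then $(S+T)(E)=E^*$.
   Context: $\rho_1(x,x^* ):=(-x,x^* )$. For monotone $S$ with nonempty graph $G(S)$, $\varphi_S(x,x^* ):=\sup_{(s,s^* )\in G(S)}[\langle x,s^*\rangle+\langle s,x^*\rangle-\langle s,s^*\rangle]$, and $\mathrm{dom}\,\varphi_S:=\{(x,x^* )\colon \varphi_S(x,x^* )\in\mathbb{R}\}$. $(S+T)x:=\{y+z\colon y\in Sx,z\in Tx\}$ and $(S+T)(E):=\bigcup_{x\in E}(S+T)x$. *)

theory Defs
  imports "HOL-Analysis.Analysis"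
begin

(* E* is modelled as bounded linear functionals 'a =>L real; pairing = blinfun_apply *)

definition reflexive_space :: "'a::banach itself \<Rightarrow> bool" where
  "reflexive_space _ \<longleftrightarrow>
     (\<forall>\<Phi> :: ('a \<Rightarrow>\<^sub>L real) \<Rightarrow>\<^sub>L real. \<exists>x::'a. \<forall>f. blinfun_apply \<Phi> f = blinfun_apply f x)"

definition graph :: "('a \<Rightarrow> 'b set) \<Rightarrow> ('a \<times> 'b) set" where
  "graph S = {(x, y). y \<in> S x}"

definition monotone_op :: "('a::real_normed_vector \<Rightarrow> ('a \<Rightarrow>\<^sub>L real) set) \<Rightarrow> bool" where
  "monotone_op S \<longleftrightarrow>
     (\<forall>x y xs ys. xs \<in> S x \<longrightarrow> ys \<in> S y \<longrightarrow> 0 \<le> blinfun_apply (xs - ys) (x - y))"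

definition maximal_monotone :: "('a::real_normed_vector \<Rightarrow> ('a \<Rightarrow>\<^sub>L real) set) \<Rightarrow> bool" where
  "maximal_monotone S \<longleftrightarrow> monotone_op S \<and>
     (\<forall>T. monotone_op T \<longrightarrow> graph S \<subseteq> graph T \<longrightarrow> graph T = graph S)"

definition fitzpatrick :: "('a::real_normed_vector \<Rightarrow> ('a \<Rightarrow>\<^sub>L real) set)
    \<Rightarrow> 'a \<times> ('a \<Rightarrow>\<^sub>L real) \<Rightarrow> ereal" where
  "fitzpatrick S p = (SUP q \<in> graph S.
      ereal (blinfun_apply (snd q) (fst p) + blinfun_apply (snd p) (fst q)
             - blinfun_apply (snd q) (fst q)))"

definition dom_fitz :: "('a::real_normed_vector \<Rightarrow> ('a \<Rightarrow>\<^sub>L real) set)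
    \<Rightarrow> ('a \<times> ('a \<Rightarrow>\<^sub>L real)) set" where
  "dom_fitz S = {p. fitzpatrick S p \<in> range ereal}"

definition rho1 :: "'a::real_normed_vector \<times> 'b \<Rightarrow> 'a \<times> 'b" where
  "rho1 p = (- fst p, snd p)"

definition op_sum :: "('a \<Rightarrow> 'b::plus set) \<Rightarrow> ('a \<Rightarrow> 'b set) \<Rightarrow> 'a \<Rightarrow> 'b set" where
  "op_sum S T x = {y + z | y z. y \<in> S x \<and> z \<in> T x}"

end

theory Submission
  imports Defs
begin

text \<open>Fix \<open>z \<in> E\<^sup>*\<close> and let \<open>h w = inf {\<phi>\<^sub>S p + \<phi>\<^sub>T r - \<langle>fst p, z\<rangle> | p + \<rho>\<^sub>1 r = w}\<close> on
  \<open>E \<times> E\<^sup>*\<close>. It is convex, finite everywhere by the constraint qualification, and nonnegative at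
  \<open>(0, z)\<close> because \<open>\<phi>\<^sub>S (x, x\<^sup>*) \<ge> \<langle>x, x\<^sup>*\<rangle>\<close> for maximally monotone \<open>S\<close>; hence
  \<open>q w = inf {h ((0, z) + t w) / t | t > 0}\<close> is sublinear. Baire's theorem, applied to the sets where
  the Fitzpatrick bounds and the norms are at most \<open>n\<close>, bounds \<open>h\<close> above near \<open>(0, z)\<close>, so
  Hahn-Banach gives a continuous linear \<open>l \<le> q\<close>. By reflexivity
  \<open>l (x, x\<^sup>*) = \<langle>x, y\<^sup>*\<rangle> + \<langle>y, x\<^sup>*\<rangle>\<close>, and \<open>l \<le> q\<close> at pairs of graph points is a
  coupled monotonicity inequality that maximality turns into \<open>z + y\<^sup>* \<in> S y\<close> and
  \<open>- y\<^sup>* \<in> T y\<close>.\<close>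

section \<open>Sublinear functionals and the Hahn-Banach theorem\<close>

definition sublinear :: "('v::real_vector \<Rightarrow> real) \<Rightarrow> bool" where
  "sublinear q \<longleftrightarrow> (\<forall>x y. q (x + y) \<le> q x + q y) \<and> (\<forall>c x. c > 0 \<longrightarrow> q (c *\<^sub>R x) = c * q x)"

lemma sublinear_add_le: "sublinear q \<Longrightarrow> q (x + y) \<le> q x + q y"
  unfolding sublinear_def by blast

lemma sublinear_zero: "sublinear q \<Longrightarrow> q 0 = 0"
  unfolding sublinear_def by (metis mult_2 scaleR_zero_right zero_less_numeral add_cancel_right_right)

lemma sublinear_scale: "sublinear q \<Longrightarrow> 0 \<le> c \<Longrightarrow> q (c *\<^sub>R x) = c * q x"
  using sublinear_zero[of q] unfolding sublinear_def by (cases "c = 0") auto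

lemma sublinear_neg_le: "sublinear q \<Longrightarrow> - q (- x) \<le> q x"
  using sublinear_add_le[of q x "- x"] sublinear_zero[of q] by simp

lemma bdd_below_sublinear_below:
  assumes "\<And>q. q \<in> C \<Longrightarrow> sublinear q \<and> (\<forall>x. q x \<le> p x)"
  shows "bdd_below ((\<lambda>q. q x) ` C)"
proof (rule bdd_belowI2)
  fix q assume "q \<in> C"
  then have "- q (- x) \<le> q x" "q (- x) \<le> p (- x)" using assms sublinear_neg_le by blast+
  then show "- p (- x) \<le> q x" by linarith
qed

lemma Inf_sublinear_below_le:
  assumes "\<And>q. q \<in> C \<Longrightarrow> sublinear q \<and> (\<forall>x. q x \<le> p x)" and "q \<in> C"
  shows "(INF q\<in>C. q x) \<le> q x"
  using bdd_below_sublinear_below[OF assms(1)] assms(2) by (intro cInf_lower) auto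

lemma sublinear_Inf_chain:
  fixes C :: "('v::real_vector \<Rightarrow> real) set"
  assumes ne: "C \<noteq> {}" and sub: "\<And>q. q \<in> C \<Longrightarrow> sublinear q \<and> (\<forall>x. q x \<le> p x)"
    and chain: "\<And>q1 q2. q1 \<in> C \<Longrightarrow> q2 \<in> C \<Longrightarrow> (\<forall>x. q1 x \<le> q2 x) \<or> (\<forall>x. q2 x \<le> q1 x)"
  shows "sublinear (\<lambda>x. INF q\<in>C. q x)"
proof -
  define m where "m x = (INF q\<in>C. q x)" for x
  have low: "m x \<le> q x" if "q \<in> C" for q x
    unfolding m_def using sub that by (rule Inf_sublinear_below_le)
  have great: "c \<le> m x" if "\<And>q. q \<in> C \<Longrightarrow> c \<le> q x" for c x
    unfolding m_def using ne that by (rule cINF_greatest)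
  have "m (x + y) - q2 y \<le> m x" if q2: "q2 \<in> C" for x y q2
  proof (rule great)
    fix q1 assume q1: "q1 \<in> C"
    \<comment> \<open>along a chain the smaller of \<open>q1\<close>, \<open>q2\<close> bounds both terms\<close>
    obtain q where q: "q \<in> C" "\<forall>z. q z \<le> q1 z" "\<forall>z. q z \<le> q2 z"
      using chain[OF q1 q2] q1 q2 by (metis order_refl)
    then have "m (x + y) \<le> q (x + y)" "q (x + y) \<le> q x + q y" "q x \<le> q1 x" "q y \<le> q2 y"
      using low[OF q(1)] sublinear_add_le[of q] sub[OF q(1)] q(2,3) by auto
    then show "m (x + y) - q2 y \<le> q1 x" by linarith
  qed
  then have "m (x + y) - m x \<le> m y" for x y
    by (intro great) (simp add: algebra_simps)
  moreover have "m (c *\<^sub>R x) = c * m x" if c: "c > 0" for c x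
  proof -
    have scale: "q (c *\<^sub>R x) = c * q x" if "q \<in> C" for q
      using sub[OF that] sublinear_scale[of q c x] c by simp
    have "c * m x \<le> m (c *\<^sub>R x)"
      using low c by (intro great) (simp add: scale mult_left_mono)
    moreover have "m (c *\<^sub>R x) / c \<le> m x"
    proof (rule great)
      fix q assume "q \<in> C"
      then have "m (c *\<^sub>R x) \<le> c * q x" using low[of q "c *\<^sub>R x"] scale by simp
      then show "m (c *\<^sub>R x) / c \<le> q x" using c by (simp add: field_simps)
    qed
    ultimately show ?thesis using c by (simp add: field_simps)
  qed
  ultimately show ?thesis unfolding sublinear_def m_def[symmetric] by (simp add: algebra_simps)
qed

definition ray_Inf :: "('v::real_vector \<Rightarrow> real) \<Rightarrow> 'v \<Rightarrow> 'v \<Rightarrow> real" where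
  "ray_Inf q a x = (INF t\<in>{0..}. q (x + t *\<^sub>R a) - t * q a)"

context
  fixes q :: "'v::real_vector \<Rightarrow> real"
  assumes q: "sublinear q"
begin

lemma ray_Inf_le:
  assumes "0 \<le> t"
  shows "ray_Inf q a x \<le> q (x + t *\<^sub>R a) - t * q a"
proof -
  have "bdd_below ((\<lambda>t. q (x + t *\<^sub>R a) - t * q a) ` {0..})"
  proof (rule bdd_belowI2)
    fix t :: real assume "t \<in> {0..}"
    have "q (t *\<^sub>R a) \<le> q (x + t *\<^sub>R a) + q (- x)"
      using sublinear_add_le[OF q, of "x + t *\<^sub>R a" "- x"] by simp
    then show "- q (- x) \<le> q (x + t *\<^sub>R a) - t * q a"
      using sublinear_scale[OF q, of t a] \<open>t \<in> {0..}\<close> by simp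
  qed
  then show ?thesis unfolding ray_Inf_def using assms by (intro cInf_lower) auto
qed

lemma ray_Inf_greatest: "(\<And>t. 0 \<le> t \<Longrightarrow> c \<le> q (x + t *\<^sub>R a) - t * q a) \<Longrightarrow> c \<le> ray_Inf q a x"
  unfolding ray_Inf_def by (intro cINF_greatest) auto

lemma ray_Inf_add_le: "ray_Inf q a (x + y) \<le> ray_Inf q a x + ray_Inf q a y"
proof -
  have "ray_Inf q a (x + y) - (q (y + s *\<^sub>R a) - s * q a) \<le> ray_Inf q a x" if s: "0 \<le> s" for s
  proof (rule ray_Inf_greatest)
    fix t :: real assume t: "0 \<le> t"
    have "q (x + y + (t + s) *\<^sub>R a) \<le> q (x + t *\<^sub>R a) + q (y + s *\<^sub>R a)"
      using sublinear_add_le[OF q, of "x + t *\<^sub>R a" "y + s *\<^sub>R a"] by (simp add: algebra_simps)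
    then show "ray_Inf q a (x + y) - (q (y + s *\<^sub>R a) - s * q a) \<le> q (x + t *\<^sub>R a) - t * q a"
      using ray_Inf_le[of "t + s" a "x + y"] s t by (simp add: algebra_simps)
  qed
  then have "ray_Inf q a (x + y) - ray_Inf q a x \<le> ray_Inf q a y"
    by (intro ray_Inf_greatest) (simp add: algebra_simps)
  then show ?thesis by linarith
qed

lemma ray_Inf_scale:
  assumes c: "0 < c"
  shows "ray_Inf q a (c *\<^sub>R x) = c * ray_Inf q a x"
proof (rule antisym)
  have "ray_Inf q a (c *\<^sub>R x) / c \<le> ray_Inf q a x"
  proof (rule ray_Inf_greatest)
    fix t :: real assume "0 \<le> t"
    then have "ray_Inf q a (c *\<^sub>R x) \<le> c * (q (x + t *\<^sub>R a) - t * q a)"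
      using ray_Inf_le[of "c * t" a "c *\<^sub>R x"] sublinear_scale[OF q, of c "x + t *\<^sub>R a"] c
      by (simp add: algebra_simps)
    then show "ray_Inf q a (c *\<^sub>R x) / c \<le> q (x + t *\<^sub>R a) - t * q a" using c by (simp add: field_simps)
  qed
  then show "ray_Inf q a (c *\<^sub>R x) \<le> c * ray_Inf q a x" using c by (simp add: field_simps)
  show "c * ray_Inf q a x \<le> ray_Inf q a (c *\<^sub>R x)"
  proof (rule ray_Inf_greatest)
    fix t :: real assume "0 \<le> t"
    then have "c * ray_Inf q a x \<le> c * (q (x + (t / c) *\<^sub>R a) - (t / c) * q a)"
      using ray_Inf_le[of "t / c" a x] c by (simp add: mult_left_mono)
    also have "\<dots> = q (c *\<^sub>R x + t *\<^sub>R a) - t * q a"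
      using sublinear_scale[OF q, of c "x + (t / c) *\<^sub>R a"] c by (simp add: algebra_simps)
    finally show "c * ray_Inf q a x \<le> q (c *\<^sub>R x + t *\<^sub>R a) - t * q a" .
  qed
qed

lemma sublinear_ray_Inf: "sublinear (ray_Inf q a)"
  unfolding sublinear_def using ray_Inf_add_le ray_Inf_scale by blast

text \<open>Minimality leaves no room below \<open>q\<close>, so \<open>ray_Inf q a = q\<close>; evaluating at \<open>- a\<close>
  with \<open>t = 1\<close> gives \<open>q (- a) \<le> - q a\<close>.\<close>
lemma minimal_sublinear_odd:
  assumes minimal: "\<And>r. sublinear r \<Longrightarrow> (\<forall>x. r x \<le> q x) \<Longrightarrow> r = q"
  shows "q (- a) = - q a"
proof -
  have "ray_Inf q a = q"
    using ray_Inf_le[of 0] by (intro minimal sublinear_ray_Inf) simp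
  then have "q (- a) \<le> q (- a + 1 *\<^sub>R a) - 1 * q a"
    using ray_Inf_le[of 1 a "- a"] by simp
  then show ?thesis using sublinear_zero[OF q] sublinear_neg_le[OF q, of "- a"] by simp
qed

end

lemma sublinear_odd_linear:
  assumes m: "sublinear m" and odd: "\<And>x. m (- x) = - m x"
  shows "linear m"
proof (rule linearI)
  show "m (x + y) = m x + m y" for x y
    using sublinear_add_le[OF m, of x y] sublinear_add_le[OF m, of "x + y" "- y"] odd[of y] by simp
  show "m (c *\<^sub>R x) = c *\<^sub>R m x" for c x
    using sublinear_scale[OF m, of c x] sublinear_scale[OF m, of "- c" x] odd[of "c *\<^sub>R x"]
    by (cases "0 \<le> c") auto
qed

lemma hahn_banach_sublinear:
  fixes p :: "'v::real_vector \<Rightarrow> real"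
  assumes "sublinear p"
  shows "\<exists>l. linear l \<and> (\<forall>x. l x \<le> p x)"
proof -
  define A where "A = {q :: 'v \<Rightarrow> real. sublinear q \<and> (\<forall>x. q x \<le> p x)}"
  define below where "below = (\<lambda>q1 q2 :: 'v \<Rightarrow> real. \<forall>x. q2 x \<le> q1 x)"
  have po: "partial_order_on A (relation_of below A)"
    unfolding partial_order_on_def preorder_on_def refl_on_def trans_def antisym_def relation_of_def below_def
    by (auto simp: fun_eq_iff intro: order_trans antisym)
  have "\<exists>m\<in>A. \<forall>q\<in>A. below m q \<longrightarrow> q = m"
  proof (rule predicate_Zorn[OF po])
    fix C assume C: "C \<in> Chains (relation_of below A)"
    show "\<exists>u\<in>A. \<forall>q\<in>C. below q u"
    proof (cases "C = {}")
      case True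
      then show ?thesis using assms unfolding A_def by auto
    next
      case False
      have "C \<subseteq> A" using C unfolding Chains_def relation_of_def by auto
      then have sub: "\<And>q. q \<in> C \<Longrightarrow> sublinear q \<and> (\<forall>x. q x \<le> p x)" unfolding A_def by blast
      moreover have "(\<forall>x. q1 x \<le> q2 x) \<or> (\<forall>x. q2 x \<le> q1 x)" if "q1 \<in> C" "q2 \<in> C" for q1 q2
        using C that unfolding Chains_def relation_of_def below_def by blast
      ultimately have "sublinear (\<lambda>x. INF q\<in>C. q x)"
        using sublinear_Inf_chain[OF False sub] by blast
      moreover obtain q0 where q0: "q0 \<in> C" using False by blast
      then have "(INF q\<in>C. q x) \<le> p x" for x
        using Inf_sublinear_below_le[OF sub q0] sub[OF q0] by (meson order_trans)
      ultimately show ?thesis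
        using Inf_sublinear_below_le[OF sub] unfolding A_def below_def
        by (intro bexI[of _ "\<lambda>x. INF q\<in>C. q x"]) auto
    qed
  qed
  then obtain m where m: "m \<in> A" and minimal: "\<And>q. q \<in> A \<Longrightarrow> below m q \<Longrightarrow> q = m" by blast
  have "m (- x) = - m x" for x
  proof (rule minimal_sublinear_odd)
    show "sublinear m" using m unfolding A_def by blast
  next
    fix r assume "sublinear r" "\<forall>x. r x \<le> m x"
    with m show "r = m" by (intro minimal) (auto simp: A_def below_def intro: order_trans)
  qed
  with m show ?thesis unfolding A_def by (blast intro: sublinear_odd_linear)
qed

section \<open>Homogenization of convex epigraphs\<close>

lemma convex_pair_combine:
  assumes "convex E" "(w1, v1) \<in> E" "(w2, v2) \<in> E" "0 \<le> l" "l \<le> 1"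
  shows "(l *\<^sub>R w1 + (1 - l) *\<^sub>R w2, l * v1 + (1 - l) * v2) \<in> E"
  using convexD[OF assms(1-3), of l "1 - l"] assms(4,5) by simp

text \<open>A bound on a ball around \<open>c\<close> transfers to a ball around \<open>a\<close> by averaging with the reflected
  point \<open>2 a - c\<close>.\<close>
lemma convex_bounded_near_reflection:
  fixes E :: "('v::real_normed_vector \<times> real) set"
  assumes "convex E" and v1: "(2 *\<^sub>R a - c, v1) \<in> E"
    and ball: "\<And>w. w \<in> ball c \<epsilon> \<Longrightarrow> \<exists>v\<le>M. (w, v) \<in> E"
    and w: "norm w < \<epsilon> / 2"
  shows "\<exists>v\<le>v1 / 2 + M / 2. (a + w, v) \<in> E"
proof -
  have "c + 2 *\<^sub>R w \<in> ball c \<epsilon>" using w by (simp add: dist_norm)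
  then obtain v2 where v2: "v2 \<le> M" "(c + 2 *\<^sub>R w, v2) \<in> E" using ball by blast
  have "((1/2) *\<^sub>R (2 *\<^sub>R a - c) + (1 - 1/2) *\<^sub>R (c + 2 *\<^sub>R w), (1/2) * v1 + (1 - 1/2) * v2) \<in> E"
    by (rule convex_pair_combine[OF assms(1) v1 v2(2)]) simp_all
  moreover have "(1/2::real) *\<^sub>R (2 *\<^sub>R a - c) + (1 - 1/2) *\<^sub>R (c + 2 *\<^sub>R w) = a + w"
    by (simp add: algebra_simps)
  ultimately show ?thesis using v2(1) by (intro exI[of _ "(1/2) * v1 + (1 - 1/2) * v2"]) auto
qed

definition homogenization :: "('v::real_vector \<times> real) set \<Rightarrow> 'v \<Rightarrow> 'v \<Rightarrow> real" where
  "homogenization E a w = (INF (t, v) \<in> {(t, v). 0 < t \<and> (a + t *\<^sub>R w, v) \<in> E}. v / t)"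

context
  fixes E :: "('v::real_vector \<times> real) set" and a :: 'v
  assumes convex: "convex E" and total: "\<And>w. \<exists>v. (w, v) \<in> E"
    and nonneg: "\<And>v. (a, v) \<in> E \<Longrightarrow> 0 \<le> v"
begin

text \<open>Nonnegativity at \<open>a\<close> bounds the quotients from below: \<open>a\<close> is a convex combination of
  \<open>a + t w\<close> and \<open>a - w\<close>.\<close>
lemma homogenization_quotient_lower:
  assumes t: "0 < t" and "(a + t *\<^sub>R w, v) \<in> E" "(a - w, v') \<in> E"
  shows "- v' \<le> v / t"
proof -
  define l where "l = 1 / (1 + t)"
  have l: "0 \<le> l" "l \<le> 1" "l * t = 1 - l" "1 - l = t / (1 + t)"
    using t unfolding l_def by (auto simp: field_simps)
  have "(l *\<^sub>R (a + t *\<^sub>R w) + (1 - l) *\<^sub>R (a - w), l * v + (1 - l) * v') \<in> E"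
    by (rule convex_pair_combine[OF convex assms(2,3) l(1,2)])
  moreover have "l *\<^sub>R (a + t *\<^sub>R w) + (1 - l) *\<^sub>R (a - w) = a + (l * t - (1 - l)) *\<^sub>R w"
    by (simp add: algebra_simps)
  ultimately have "0 \<le> l * v + (1 - l) * v'" using nonneg l(3) by simp
  also have "l * v + (1 - l) * v' = (v + t * v') / (1 + t)"
    unfolding l(4) unfolding l_def by (simp add: add_divide_distrib)
  finally show ?thesis using t by (simp add: zero_le_divide_iff field_simps)
qed

lemma homogenization_le_quotient:
  assumes "0 < t" "(a + t *\<^sub>R w, v) \<in> E"
  shows "homogenization E a w \<le> v / t"
proof -
  obtain v' where "(a - w, v') \<in> E" using total by blast
  then have "bdd_below ((\<lambda>(t, v). v / t) ` {(t, v). 0 < t \<and> (a + t *\<^sub>R w, v) \<in> E})"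
    using homogenization_quotient_lower by (intro bdd_belowI2[of _ "- v'"]) auto
  then show ?thesis unfolding homogenization_def using assms by (intro cInf_lower) auto
qed

lemma homogenization_le: "(a + w, v) \<in> E \<Longrightarrow> homogenization E a w \<le> v"
  using homogenization_le_quotient[of 1 w v] by simp

lemma homogenization_greatest:
  assumes "\<And>t v. 0 < t \<Longrightarrow> (a + t *\<^sub>R w, v) \<in> E \<Longrightarrow> c \<le> v / t"
  shows "c \<le> homogenization E a w"
proof -
  obtain v where "(a + 1 *\<^sub>R w, v) \<in> E" using total by blast
  then have "(1, v) \<in> {(t, v). 0 < t \<and> (a + t *\<^sub>R w, v) \<in> E}" by simp
  then have "{(t, v). 0 < t \<and> (a + t *\<^sub>R w, v) \<in> E} \<noteq> {}" by blast
  then show ?thesis unfolding homogenization_def using assms by (intro cINF_greatest) auto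
qed

text \<open>Two quotients at \<open>x\<close> and \<open>y\<close> combine convexly into one at \<open>x + y\<close>.\<close>
lemma homogenization_add_le: "homogenization E a (x + y) \<le> homogenization E a x + homogenization E a y"
proof -
  have "homogenization E a (x + y) \<le> v1 / t + v2 / s"
    if t: "0 < t" "(a + t *\<^sub>R x, v1) \<in> E" and s: "0 < s" "(a + s *\<^sub>R y, v2) \<in> E" for t s v1 v2
  proof -
    define l where "l = s / (t + s)"
    have l: "0 \<le> l" "l \<le> 1" "l * t = t * s / (t + s)" "(1 - l) * s = t * s / (t + s)" "1 - l = t / (t + s)"
      using t s unfolding l_def by (auto simp: field_simps)
    have "(l *\<^sub>R (a + t *\<^sub>R x) + (1 - l) *\<^sub>R (a + s *\<^sub>R y), l * v1 + (1 - l) * v2) \<in> E"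
      by (rule convex_pair_combine[OF convex t(2) s(2) l(1,2)])
    moreover have "l *\<^sub>R (a + t *\<^sub>R x) + (1 - l) *\<^sub>R (a + s *\<^sub>R y)
        = (l + (1 - l)) *\<^sub>R a + (l * t) *\<^sub>R x + ((1 - l) * s) *\<^sub>R y"
      by (simp add: algebra_simps)
    ultimately have "(a + (t * s / (t + s)) *\<^sub>R (x + y), l * v1 + (1 - l) * v2) \<in> E"
      by (simp only: l(3,4) scaleR_add_right) (simp add: add.assoc)
    then have "homogenization E a (x + y) \<le> (l * v1 + (1 - l) * v2) / (t * s / (t + s))"
      using t s by (intro homogenization_le_quotient) auto
    also have "l * v1 + (1 - l) * v2 = (s * v1 + t * v2) / (t + s)"
      unfolding l(5) unfolding l_def by (simp add: add_divide_distrib)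
    also have "\<dots> / (t * s / (t + s)) = (s * v1 + t * v2) / (t * s)"
      using t s by simp
    also have "\<dots> = v1 / t + v2 / s"
      using t s by (simp add: field_simps)
    finally show ?thesis .
  qed
  then have "homogenization E a (x + y) - v2 / s \<le> homogenization E a x"
    if "0 < s" "(a + s *\<^sub>R y, v2) \<in> E" for s v2
    using that by (intro homogenization_greatest) (auto simp: algebra_simps)
  then have "homogenization E a (x + y) - homogenization E a x \<le> homogenization E a y"
    by (intro homogenization_greatest) (auto simp: algebra_simps)
  then show ?thesis by linarith
qed

lemma homogenization_scale:
  assumes c: "0 < c"
  shows "homogenization E a (c *\<^sub>R x) = c * homogenization E a x"
proof (rule antisym)
  have "homogenization E a (c *\<^sub>R x) / c \<le> homogenization E a x"
  proof (rule homogenization_greatest)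
    fix t v assume "0 < t" "(a + t *\<^sub>R x, v) \<in> E"
    then have "homogenization E a (c *\<^sub>R x) \<le> v / (t / c)"
      using c by (intro homogenization_le_quotient) auto
    then show "homogenization E a (c *\<^sub>R x) / c \<le> v / t" using c \<open>0 < t\<close> by (simp add: field_simps)
  qed
  then show "homogenization E a (c *\<^sub>R x) \<le> c * homogenization E a x" using c by (simp add: field_simps)
  show "c * homogenization E a x \<le> homogenization E a (c *\<^sub>R x)"
  proof (rule homogenization_greatest)
    fix t v assume "0 < t" "(a + t *\<^sub>R (c *\<^sub>R x), v) \<in> E"
    then have "homogenization E a x \<le> v / (t * c)"
      using c by (intro homogenization_le_quotient) auto
    then show "c * homogenization E a x \<le> v / t" using c \<open>0 < t\<close> by (simp add: field_simps)
  qed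
qed

lemma sublinear_homogenization: "sublinear (homogenization E a)"
  unfolding sublinear_def using homogenization_add_le homogenization_scale by blast

end

lemma bounded_linear_below_sublinear:
  fixes q :: "'v::real_normed_vector \<Rightarrow> real"
  assumes q: "sublinear q" and \<delta>: "\<delta> > 0" and bound: "\<And>w. norm w < \<delta> \<Longrightarrow> q w \<le> M"
  shows "\<exists>l. bounded_linear l \<and> (\<forall>w. l w \<le> q w)"
proof -
  obtain l where l: "linear l" "\<And>w. l w \<le> q w" using hahn_banach_sublinear[OF q] by blast
  interpret l: linear l by (rule l(1))
  have lM: "\<bar>l w\<bar> \<le> M" if "norm w < \<delta>" for w
    using l(2)[of w] l(2)[of "- w"] bound[of w] bound[of "- w"] that l.neg by force
  have "norm (l x) \<le> norm x * (2 * M / \<delta>)" for x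
  proof (cases "x = 0")
    case False
    define c where "c = \<delta> / (2 * norm x)"
    have c: "c > 0" "norm (c *\<^sub>R x) < \<delta>" using \<delta> False unfolding c_def by auto
    then have "c * \<bar>l x\<bar> \<le> M" using lM[of "c *\<^sub>R x"] by (simp add: l.scale abs_mult)
    then show ?thesis using c \<delta> False unfolding c_def by (simp add: field_simps)
  qed (simp add: l.zero)
  then have "bounded_linear l"
    by (intro bounded_linear_intro[where K = "2 * M / \<delta>"]) (simp_all add: l.add l.scale)
  then show ?thesis using l(2) by blast
qed

section \<open>Sets closed under half series and Baire's theorem\<close>

definition half_series_closed :: "'v::real_normed_vector set \<Rightarrow> bool" where
  "half_series_closed C \<longleftrightarrow>
     (\<forall>k s. (\<forall>j. k j \<in> C) \<longrightarrow> (\<lambda>j. (1/2::real) ^ Suc j *\<^sub>R k j) sums s \<longrightarrow> s \<in> C)"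

lemma sum_half_powers: "(\<Sum>j<n. (1/2::real) ^ Suc j) = 1 - (1/2) ^ n"
  by (induction n) simp_all

lemma half_powers_sums: "(\<lambda>j. (1/2::real) ^ Suc j) sums 1"
  unfolding sums_def sum_half_powers
  using tendsto_diff[OF tendsto_const LIMSEQ_power_zero[of "1/2::real"]] by simp

lemma half_series_sums_suminf:
  fixes k :: "nat \<Rightarrow> 'v::banach"
  assumes "\<And>j. norm (k j) \<le> B"
  shows "(\<lambda>j. (1/2::real) ^ Suc j *\<^sub>R k j) sums (\<Sum>j. (1/2::real) ^ Suc j *\<^sub>R k j)"
proof -
  have "summable (\<lambda>j. (1/2::real) ^ Suc j * B)"
    using sums_summable[OF sums_mult2[OF half_powers_sums]] by blast
  then have "summable (\<lambda>j. (1/2::real) ^ Suc j *\<^sub>R k j)"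
    by (rule summable_comparison_test'[where N = 0]) (simp add: assms mult_left_mono)
  then show ?thesis by (rule summable_sums)
qed

text \<open>The normalised partial sums of a half series are convex combinations converging to its sum.\<close>
lemma closed_convex_half_series_closed:
  assumes "closed C" "convex C"
  shows "half_series_closed C"
  unfolding half_series_closed_def
proof (intro allI impI)
  fix k s assume k: "\<forall>j. k j \<in> C" and s: "(\<lambda>j. (1/2::real) ^ Suc j *\<^sub>R k j) sums s"
  define x where "x n = (1 / (1 - (1/2) ^ Suc n)) *\<^sub>R (\<Sum>j<Suc n. (1/2::real) ^ Suc j *\<^sub>R k j)" for n
  have "x n \<in> C" for n
  proof -
    have "x n = (\<Sum>j<Suc n. ((1/2) ^ Suc j / (1 - (1/2) ^ Suc n)) *\<^sub>R k j)"
      unfolding x_def scaleR_sum_right by (rule sum.cong) simp_all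
    also have "\<dots> \<in> C"
    proof (rule convex_sum)
      have "(1/2::real) ^ Suc n < 1" by (rule power_Suc_less_one) simp_all
      then show "(\<Sum>j<Suc n. (1/2::real) ^ Suc j / (1 - (1/2) ^ Suc n)) = 1"
        "\<And>j. 0 \<le> (1/2::real) ^ Suc j / (1 - (1/2) ^ Suc n)"
        unfolding sum_divide_distrib[symmetric] sum_half_powers by simp_all
    qed (use k assms(2) in auto)
    finally show ?thesis .
  qed
  moreover have "x \<longlonglongrightarrow> (1 / (1 - 0)) *\<^sub>R s"
    unfolding x_def using s unfolding sums_def
    by (intro tendsto_scaleR tendsto_divide tendsto_diff tendsto_const LIMSEQ_Suc LIMSEQ_power_zero) simp_all
  ultimately have "(1 / (1 - 0)) *\<^sub>R s \<in> C" using closed_sequentially[OF assms(1)] by blast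
  then show "s \<in> C" by simp
qed

lemma bounded_linear_image_half_series_closed:
  fixes f :: "'v::banach \<Rightarrow> 'w::real_normed_vector"
  assumes f: "bounded_linear f" and "bounded A" and A: "half_series_closed A"
  shows "half_series_closed (f ` A)"
  unfolding half_series_closed_def
proof (intro allI impI)
  interpret f: bounded_linear f by (rule f)
  fix k s assume k: "\<forall>j. k j \<in> f ` A" and s: "(\<lambda>j. (1/2::real) ^ Suc j *\<^sub>R k j) sums s"
  have "\<forall>j. \<exists>x. x \<in> A \<and> k j = f x" using k by blast
  then obtain a where a: "\<And>j. a j \<in> A" "\<And>j. k j = f (a j)" by (metis (full_types))
  obtain B where "\<And>x. x \<in> A \<Longrightarrow> norm x \<le> B" using \<open>bounded A\<close> by (meson bounded_iff)
  then have as: "(\<lambda>j. (1/2::real) ^ Suc j *\<^sub>R a j) sums (\<Sum>j. (1/2::real) ^ Suc j *\<^sub>R a j)"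
    using a(1) by (intro half_series_sums_suminf) blast
  then have "(\<Sum>j. (1/2::real) ^ Suc j *\<^sub>R a j) \<in> A" using A a(1) unfolding half_series_closed_def by blast
  moreover have "(\<lambda>j. (1/2::real) ^ Suc j *\<^sub>R k j) sums f (\<Sum>j. (1/2::real) ^ Suc j *\<^sub>R a j)"
    using f.sums[OF as] by (simp add: a(2) f.scaleR)
  ultimately show "s \<in> f ` A" using sums_unique2[OF s] by blast
qed

lemma half_series_telescope:
  fixes e k :: "nat \<Rightarrow> 'v::real_normed_vector"
  assumes step: "\<And>j. e (Suc j) = c + 2 *\<^sub>R e j - k j" and bound: "\<And>j. norm (e j) \<le> B"
  shows "(\<lambda>j. (1/2::real) ^ Suc j *\<^sub>R k j) sums (c + e 0)"
proof -
  have partial: "(\<Sum>j<N. (1/2::real) ^ Suc j *\<^sub>R k j) = (c + e 0) - (1/2) ^ N *\<^sub>R (c + e N)" for N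
  proof (induction N)
    case (Suc N)
    have shift: "x - (h + h) *\<^sub>R (c + y) + h *\<^sub>R (c + 2 *\<^sub>R y - z) = x - h *\<^sub>R (c + z)" for x y z and h :: real
      by (simp add: algebra_simps flip: scaleR_2)
    have kN: "k N = c + 2 *\<^sub>R e N - e (Suc N)" using step[of N] by (simp add: algebra_simps)
    have hN: "(1/2::real) ^ N = (1/2) ^ Suc N + (1/2) ^ Suc N" by simp
    have "(\<Sum>j<Suc N. (1/2::real) ^ Suc j *\<^sub>R k j) = (c + e 0) - (1/2) ^ N *\<^sub>R (c + e N) + (1/2) ^ Suc N *\<^sub>R k N"
      by (simp only: sum.lessThan_Suc Suc.IH)
    also have "\<dots> = (c + e 0) - (1/2) ^ Suc N *\<^sub>R (c + e (Suc N))"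
      unfolding kN hN by (rule shift)
    finally show ?case .
  qed simp
  have "(\<lambda>N. (1/2::real) ^ N *\<^sub>R e N) \<longlonglongrightarrow> 0"
  proof (rule Lim_null_comparison)
    show "\<forall>\<^sub>F N in sequentially. norm ((1/2::real) ^ N *\<^sub>R e N) \<le> (1/2) ^ N * B"
      using bound by (intro always_eventually allI) (simp add: mult_left_mono)
    show "(\<lambda>N. (1/2::real) ^ N * B) \<longlonglongrightarrow> 0"
      by (intro tendsto_mult_left_zero LIMSEQ_power_zero) simp
  qed
  then have "(\<lambda>N. (c + e 0) - ((1/2::real) ^ N *\<^sub>R c + (1/2) ^ N *\<^sub>R e N)) \<longlonglongrightarrow> (c + e 0) - (0 *\<^sub>R c + 0)"
    by (intro tendsto_diff tendsto_add tendsto_scaleR tendsto_const LIMSEQ_power_zero) simp_all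
  then have "(\<lambda>N. (c + e 0) - (1/2::real) ^ N *\<^sub>R (c + e N)) \<longlonglongrightarrow> c + e 0"
    by (simp add: scaleR_add_right)
  then show ?thesis unfolding sums_def partial by simp
qed

text \<open>Successive approximation: correct the error, doubled, by a point of \<open>K\<close>.\<close>
lemma closure_ball_half_series:
  fixes K :: "'v::real_normed_vector set"
  assumes "ball c \<epsilon> \<subseteq> closure K" and "norm u < \<epsilon>"
  shows "\<exists>k. (\<forall>j. k j \<in> K) \<and> (\<lambda>j. (1/2::real) ^ Suc j *\<^sub>R k j) sums (c + (1/2::real) *\<^sub>R u)"
proof -
  have "\<exists>k\<in>K. norm (c + 2 *\<^sub>R e - k) < \<epsilon> / 2" if "norm e < \<epsilon> / 2" for e
  proof -
    have "c + 2 *\<^sub>R e \<in> closure K" using assms(1) that by (auto simp: dist_norm)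
    moreover have "\<epsilon> / 2 > 0" using assms(2) norm_ge_zero[of u] by linarith
    ultimately obtain k where "k \<in> K" "dist k (c + 2 *\<^sub>R e) < \<epsilon> / 2"
      unfolding closure_approachable by blast
    then show ?thesis by (auto simp: dist_norm norm_minus_commute)
  qed
  then obtain next_pt where next_pt: "\<And>e. norm e < \<epsilon> / 2 \<Longrightarrow> next_pt e \<in> K \<and> norm (c + 2 *\<^sub>R e - next_pt e) < \<epsilon> / 2"
    by metis
  define e where "e = rec_nat ((1/2::real) *\<^sub>R u) (\<lambda>_ x. c + 2 *\<^sub>R x - next_pt x)"
  have e0: "e 0 = (1/2::real) *\<^sub>R u" and eS: "e (Suc j) = c + 2 *\<^sub>R e j - next_pt (e j)" for j
    unfolding e_def by simp_all
  have e_small: "norm (e j) < \<epsilon> / 2" for j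
    by (induction j) (use assms(2) e0 eS next_pt in auto)
  have "(\<lambda>j. (1/2::real) ^ Suc j *\<^sub>R next_pt (e j)) sums (c + e 0)"
    using e_small by (intro half_series_telescope[where B = "\<epsilon> / 2"] eS) (simp add: less_imp_le)
  then show ?thesis using e0 e_small next_pt by (intro exI[of _ "\<lambda>j. next_pt (e j)"]) auto
qed

lemma half_series_closed_ball_subset:
  assumes "half_series_closed K" and "ball c \<epsilon> \<subseteq> closure K"
  shows "ball c (\<epsilon> / 2) \<subseteq> K"
proof
  fix x assume "x \<in> ball c (\<epsilon> / 2)"
  then have "norm (2 *\<^sub>R (x - c)) < \<epsilon>" by (simp add: dist_norm norm_minus_commute)
  from closure_ball_half_series[OF assms(2) this] assms(1)
  have "c + (1/2::real) *\<^sub>R (2 *\<^sub>R (x - c)) \<in> K" unfolding half_series_closed_def by blast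
  then show "x \<in> K" by simp
qed

lemma baire_half_series_closed:
  fixes C :: "nat \<Rightarrow> 'v::banach set"
  assumes cover: "\<And>w. \<exists>n. w \<in> C n" and C: "\<And>n. half_series_closed (C n)"
  obtains n c \<epsilon> where "\<epsilon> > 0" "ball c \<epsilon> \<subseteq> C n"
proof -
  have "\<exists>n. interior (closure (C n)) \<noteq> {}"
  proof (rule ccontr)
    assume "\<not> (\<exists>n. interior (closure (C n)) \<noteq> {})"
    then have "euclidean interior_of \<Union> (range (\<lambda>n. closure (C n))) = {}"
      by (intro Baire_category_alt)
        (auto simp: completely_metrizable_space_euclidean closed_closedin[symmetric])
    moreover have "\<Union> (range (\<lambda>n. closure (C n))) = UNIV"
      using cover closure_subset by blast
    ultimately show False by simp
  qed
  then obtain n c \<epsilon> where "\<epsilon> > 0" "ball c \<epsilon> \<subseteq> closure (C n)"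
    by (meson ex_in_conv open_contains_ball open_interior interior_subset subset_trans)
  with half_series_closed_ball_subset[OF C] that show ?thesis by (meson half_gt_zero)
qed

section \<open>Fitzpatrick functions of maximally monotone operators\<close>

lemma fitzpatrick_le_iff:
  "fitzpatrick S p \<le> ereal c \<longleftrightarrow>
     (\<forall>(s, s') \<in> graph S. blinfun_apply s' (fst p) + blinfun_apply (snd p) s - blinfun_apply s' s \<le> c)"
  unfolding fitzpatrick_def by (auto simp: SUP_le_iff)

lemma fitzpatrick_le_convex:
  assumes "fitzpatrick S p1 \<le> ereal c1" "fitzpatrick S p2 \<le> ereal c2" "0 \<le> l" "l \<le> 1"
  shows "fitzpatrick S (l *\<^sub>R p1 + (1 - l) *\<^sub>R p2) \<le> ereal (l * c1 + (1 - l) * c2)"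
  unfolding fitzpatrick_le_iff
proof (clarify)
  fix s s' assume "(s, s') \<in> graph S"
  define aff where "aff p = blinfun_apply s' (fst p) + blinfun_apply (snd p) s - blinfun_apply s' s" for p
  have "aff p1 \<le> c1" "aff p2 \<le> c2"
    using assms(1,2) \<open>(s, s') \<in> graph S\<close> unfolding fitzpatrick_le_iff aff_def by auto
  then have "l * aff p1 + (1 - l) * aff p2 \<le> l * c1 + (1 - l) * c2"
    using assms(3,4) by (intro add_mono mult_left_mono) auto
  moreover have "aff (l *\<^sub>R p1 + (1 - l) *\<^sub>R p2) = l * aff p1 + (1 - l) * aff p2"
    unfolding aff_def by (simp add: blinfun.add_right blinfun.scaleR_right blinfun.add_left blinfun.scaleR_left
      blinfun.diff_right blinfun.diff_left algebra_simps)
  ultimately show "aff (l *\<^sub>R p1 + (1 - l) *\<^sub>R p2) \<le> l * c1 + (1 - l) * c2" by simp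
qed

lemma convex_fitzpatrick_sublevel: "convex {p. fitzpatrick S p \<le> ereal c}"
proof (rule convexI)
  fix x y and u v :: real
  assume "x \<in> {p. fitzpatrick S p \<le> ereal c}" "y \<in> {p. fitzpatrick S p \<le> ereal c}" "0 \<le> u" "0 \<le> v" "u + v = 1"
  have v: "v = 1 - u" using \<open>u + v = 1\<close> by linarith
  have c: "u * c + (1 - u) * c = c" by (simp add: algebra_simps)
  have "fitzpatrick S (u *\<^sub>R x + (1 - u) *\<^sub>R y) \<le> ereal (u * c + (1 - u) * c)"
    using \<open>x \<in> _\<close> \<open>y \<in> _\<close> \<open>0 \<le> u\<close> \<open>0 \<le> v\<close> v by (intro fitzpatrick_le_convex) auto
  then show "u *\<^sub>R x + v *\<^sub>R y \<in> {p. fitzpatrick S p \<le> ereal c}"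
    unfolding v c by simp
qed

lemma closed_fitzpatrick_sublevel: "closed {p. fitzpatrick S p \<le> ereal c}"
proof -
  have "{p. fitzpatrick S p \<le> ereal c} = (\<Inter>(s, s') \<in> graph S.
      {p. blinfun_apply s' (fst p) + blinfun_apply (snd p) s - blinfun_apply s' s \<le> c})"
    unfolding fitzpatrick_le_iff by auto
  moreover have "closed {p :: 'a \<times> ('a \<Rightarrow>\<^sub>L real). blinfun_apply s' (fst p) + blinfun_apply (snd p) s - blinfun_apply s' s \<le> c}"
    for s :: 'a and s'
    by (intro closed_Collect_le continuous_intros) 
  ultimately show ?thesis by (auto intro!: closed_INT)
qed

lemma maximal_monotone_memI:
  assumes S: "maximal_monotone S"
    and rel: "\<And>s s'. s' \<in> S s \<Longrightarrow> 0 \<le> blinfun_apply (x' - s') (x - s)"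
  shows "x' \<in> S x"
proof -
  define T where "T y = S y \<union> (if y = x then {x'} else {})" for y
  have swap: "blinfun_apply (a - b) (u - v) = blinfun_apply (b - a) (v - u)"
    for a b :: "'a \<Rightarrow>\<^sub>L real" and u v :: 'a
    by (simp add: blinfun.diff_left blinfun.diff_right)
  have "monotone_op T"
    unfolding monotone_op_def
  proof (intro allI impI)
    fix y z ys zs assume ys: "ys \<in> T y" and zs: "zs \<in> T z"
    consider "ys \<in> S y" "zs \<in> S z" | "ys \<in> S y" "z = x" "zs = x'" | "y = x" "ys = x'" "zs \<in> S z"
      | "y = x" "ys = x'" "z = x" "zs = x'"
      using ys zs unfolding T_def by (auto split: if_splits)
    then show "0 \<le> blinfun_apply (ys - zs) (y - z)"
    proof cases
      case 1
      then show ?thesis using S unfolding maximal_monotone_def monotone_op_def by blast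
    next
      case 2
      then show ?thesis using rel[of ys y] swap by metis
    next
      case 3
      then show ?thesis using rel by simp
    qed simp
  qed
  moreover have "graph S \<subseteq> graph T" unfolding graph_def T_def by auto
  ultimately have "graph T = graph S" using S unfolding maximal_monotone_def by blast
  moreover have "(x, x') \<in> graph T" unfolding graph_def T_def by auto
  ultimately show ?thesis unfolding graph_def by auto
qed

lemma fitzpatrick_ge_pairing:
  assumes "maximal_monotone S"
  shows "ereal (blinfun_apply x' x) \<le> fitzpatrick S (x, x')"
proof (rule ccontr)
  assume "\<not> ?thesis"
  then have lt: "fitzpatrick S (x, x') < ereal (blinfun_apply x' x)" by simp
  have upper: "ereal (blinfun_apply s' x + blinfun_apply x' s - blinfun_apply s' s) \<le> fitzpatrick S (x, x')"
    if "s' \<in> S s" for s s'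
    unfolding fitzpatrick_def using that by (intro SUP_upper2[of "(s, s')"]) (auto simp: graph_def)
  have "0 \<le> blinfun_apply (x' - s') (x - s)" if "s' \<in> S s" for s s'
    using le_less_trans[OF upper[OF that] lt] by (simp add: blinfun.diff_left blinfun.diff_right)
  then have "x' \<in> S x" by (rule maximal_monotone_memI[OF assms])
  from le_less_trans[OF upper[OF this] lt] show False by simp
qed

lemma fitzpatrick_graph_le:
  assumes "monotone_op S" and "s' \<in> S s"
  shows "fitzpatrick S (s, s') \<le> ereal (blinfun_apply s' s)"
  unfolding fitzpatrick_le_iff
proof (clarify)
  fix u u' assume "(u, u') \<in> graph S"
  then have "0 \<le> blinfun_apply (s' - u') (s - u)"
    using assms unfolding monotone_op_def graph_def by blast
  then show "blinfun_apply u' (fst (s, s')) + blinfun_apply (snd (s, s')) u - blinfun_apply u' u \<le> blinfun_apply s' s"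
    by (simp add: blinfun.diff_left blinfun.diff_right)
qed

lemma maximal_monotone_pair_memI:
  assumes S: "maximal_monotone S" and T: "maximal_monotone T"
    and ineq: "\<And>s s' u t'. s' \<in> S s \<Longrightarrow> t' \<in> T u \<Longrightarrow>
       0 \<le> blinfun_apply (s' - a) (s - y) + blinfun_apply (t' - b) (u - y)"
  shows "a \<in> S y" and "b \<in> T y"
proof -
  have swap: "blinfun_apply (c - s') (y - s) = blinfun_apply (s' - c) (s - y)"
    for c s' :: "'a \<Rightarrow>\<^sub>L real" and s :: 'a
    by (simp add: blinfun.diff_left blinfun.diff_right)
  show "a \<in> S y"
  proof (rule ccontr)
    assume "a \<notin> S y"
    then obtain s s' where s: "s' \<in> S s" "blinfun_apply (s' - a) (s - y) < 0"
      using maximal_monotone_memI[OF S, of a y] swap by force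
    have "0 \<le> blinfun_apply (b - t') (y - u)" if "t' \<in> T u" for u t'
      using ineq[OF s(1) that] s(2) swap by (metis add_less_same_cancel2 less_trans not_le)
    then have "b \<in> T y" by (rule maximal_monotone_memI[OF T])
    from ineq[OF s(1) this] s(2) show False by simp
  qed
  show "b \<in> T y"
  proof (rule ccontr)
    assume "b \<notin> T y"
    then obtain u t' where t: "t' \<in> T u" "blinfun_apply (t' - b) (u - y) < 0"
      using maximal_monotone_memI[OF T, of b y] swap by force
    have "0 \<le> blinfun_apply (a - s') (y - s)" if "s' \<in> S s" for s s'
      using ineq[OF that t(1)] t(2) swap by (metis add_less_same_cancel1 less_trans not_le)
    then have "a \<in> S y" by (rule maximal_monotone_memI[OF S])
    from ineq[OF this t(1)] t(2) show False by simp
  qed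
qed

section \<open>Surjectivity of the sum\<close>

definition fitz_sum_epi :: "('a::real_normed_vector \<Rightarrow> ('a \<Rightarrow>\<^sub>L real) set) \<Rightarrow> ('a \<Rightarrow> ('a \<Rightarrow>\<^sub>L real) set)
    \<Rightarrow> ('a \<Rightarrow>\<^sub>L real) \<Rightarrow> (('a \<times> ('a \<Rightarrow>\<^sub>L real)) \<times> real) set" where
  "fitz_sum_epi S T z = {(p + rho1 r, c1 + c2 - blinfun_apply z (fst p)) | p r c1 c2.
     fitzpatrick S p \<le> ereal c1 \<and> fitzpatrick T r \<le> ereal c2}"

lemma bounded_linear_rho1: "bounded_linear rho1"
proof -
  have "rho1 = (\<lambda>p :: 'a::real_normed_vector \<times> 'b::real_normed_vector. (- fst p, snd p))"
    unfolding rho1_def by (rule ext) simp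
  moreover have "bounded_linear (\<lambda>p :: 'a \<times> 'b. (- fst p, snd p))"
    by (intro bounded_linear_Pair bounded_linear_minus bounded_linear_fst bounded_linear_snd)
  ultimately show ?thesis by simp
qed

lemma convex_fitz_sum_epi: "convex (fitz_sum_epi S T z)"
proof (rule convexI)
  interpret rho1: bounded_linear rho1 by (rule bounded_linear_rho1)
  fix x y and u v :: real
  assume "x \<in> fitz_sum_epi S T z" "y \<in> fitz_sum_epi S T z" "0 \<le> u" "0 \<le> v" "u + v = 1"
  then obtain p1 r1 c1 d1 p2 r2 c2 d2 where
    x: "x = (p1 + rho1 r1, c1 + d1 - blinfun_apply z (fst p1))"
      "fitzpatrick S p1 \<le> ereal c1" "fitzpatrick T r1 \<le> ereal d1" and
    y: "y = (p2 + rho1 r2, c2 + d2 - blinfun_apply z (fst p2))"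
      "fitzpatrick S p2 \<le> ereal c2" "fitzpatrick T r2 \<le> ereal d2" and
    uv: "0 \<le> u" "u \<le> 1" "v = 1 - u"
    unfolding fitz_sum_epi_def by auto
  have "fitzpatrick S (u *\<^sub>R p1 + (1 - u) *\<^sub>R p2) \<le> ereal (u * c1 + (1 - u) * c2)"
    "fitzpatrick T (u *\<^sub>R r1 + (1 - u) *\<^sub>R r2) \<le> ereal (u * d1 + (1 - u) * d2)"
    using x y uv by (auto intro: fitzpatrick_le_convex)
  moreover have "u *\<^sub>R x + v *\<^sub>R y =
      ((u *\<^sub>R p1 + (1 - u) *\<^sub>R p2) + rho1 (u *\<^sub>R r1 + (1 - u) *\<^sub>R r2),
       (u * c1 + (1 - u) * c2) + (u * d1 + (1 - u) * d2) - blinfun_apply z (fst (u *\<^sub>R p1 + (1 - u) *\<^sub>R p2)))"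
    unfolding x y uv
    by (simp add: rho1.add rho1.diff rho1.scaleR blinfun.add_right blinfun.diff_right blinfun.scaleR_right algebra_simps)
  ultimately show "u *\<^sub>R x + v *\<^sub>R y \<in> fitz_sum_epi S T z"
    unfolding fitz_sum_epi_def by blast
qed

lemma fitz_sum_epi_nonneg:
  assumes "maximal_monotone S" "maximal_monotone T" "((0, z), v) \<in> fitz_sum_epi S T z"
  shows "0 \<le> v"
proof -
  obtain x x' u u' c1 c2 where v: "v = c1 + c2 - blinfun_apply z x"
    and x: "fitzpatrick S (x, x') \<le> ereal c1" and u: "fitzpatrick T (u, u') \<le> ereal c2"
    and sum: "(x, x') + rho1 (u, u') = (0, z)"
    using assms(3) unfolding fitz_sum_epi_def by fastforce
  have "u = x" "u' = z - x'" using sum unfolding rho1_def by auto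
  moreover have "blinfun_apply x' x \<le> c1" "blinfun_apply u' u \<le> c2"
    using order_trans[OF fitzpatrick_ge_pairing[OF assms(1)] x] order_trans[OF fitzpatrick_ge_pairing[OF assms(2)] u]
    by simp_all
  ultimately show ?thesis unfolding v by (simp add: blinfun.diff_left)
qed

lemma fitz_sum_epi_graph:
  assumes "monotone_op S" "monotone_op T" "s' \<in> S s" "t' \<in> T u"
  shows "((s - u, s' + t'), blinfun_apply s' s + blinfun_apply t' u - blinfun_apply z s) \<in> fitz_sum_epi S T z"
proof -
  have "(s - u, s' + t') = (s, s') + rho1 (u, t')" unfolding rho1_def by simp
  then show ?thesis
    using fitzpatrick_graph_le[OF assms(1,3)] fitzpatrick_graph_le[OF assms(2,4)]
    unfolding fitz_sum_epi_def by fastforce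
qed

lemma dom_fitz_sum_decompose:
  assumes "{p + q | p q. p \<in> dom_fitz S \<and> q \<in> rho1 ` dom_fitz T} = UNIV"
  obtains p r c1 c2 where "w = p + rho1 r" "fitzpatrick S p \<le> ereal c1" "fitzpatrick T r \<le> ereal c2"
proof -
  have "w \<in> {p + q | p q. p \<in> dom_fitz S \<and> q \<in> rho1 ` dom_fitz T}" using assms by simp
  then obtain p r where "w = p + rho1 r" "p \<in> dom_fitz S" "r \<in> dom_fitz T" by blast
  moreover from this obtain c1 c2 where "fitzpatrick S p = ereal c1" "fitzpatrick T r = ereal c2"
    unfolding dom_fitz_def by blast
  ultimately show ?thesis using that[of p r c1 c2] by simp
qed

lemma fitz_sum_epi_total:
  assumes "{p + q | p q. p \<in> dom_fitz S \<and> q \<in> rho1 ` dom_fitz T} = UNIV"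
  shows "\<exists>v. (w, v) \<in> fitz_sum_epi S T z"
proof -
  obtain p r c1 c2 where "w = p + rho1 r" "fitzpatrick S p \<le> ereal c1" "fitzpatrick T r \<le> ereal c2"
    using dom_fitz_sum_decompose[OF assms] .
  then have "(w, c1 + c2 - blinfun_apply z (fst p)) \<in> fitz_sum_epi S T z"
    unfolding fitz_sum_epi_def by blast
  then show ?thesis by blast
qed

text \<open>Baire's theorem applies because the sets \<open>C n\<close>, bounded linear images of bounded closed convex
  sets, are closed under half series even though they need not be closed.\<close>
lemma fitz_sum_epi_bounded_on_ball:
  fixes S T :: "'a::banach \<Rightarrow> ('a \<Rightarrow>\<^sub>L real) set"
  assumes cq: "{p + q | p q. p \<in> dom_fitz S \<and> q \<in> rho1 ` dom_fitz T} = UNIV"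
  obtains c \<epsilon> M where "\<epsilon> > 0" "\<And>w. w \<in> ball c \<epsilon> \<Longrightarrow> \<exists>v\<le>M. (w, v) \<in> fitz_sum_epi S T z"
proof -
  define A where "A X n = cball 0 (real n) \<inter> {p. fitzpatrick X p \<le> ereal (real n)}"
    for X :: "'a \<Rightarrow> ('a \<Rightarrow>\<^sub>L real) set" and n :: nat
  define f where "f q = fst q + rho1 (snd q)" for q :: "('a \<times> ('a \<Rightarrow>\<^sub>L real)) \<times> ('a \<times> ('a \<Rightarrow>\<^sub>L real))"
  define C where "C n = f ` (A S n \<times> A T n)" for n
  have cover: "\<exists>n. w \<in> C n" for w
  proof -
    obtain p r c1 c2 where pr: "w = p + rho1 r" "fitzpatrick S p \<le> ereal c1" "fitzpatrick T r \<le> ereal c2"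
      using dom_fitz_sum_decompose[OF cq] .
    define n where "n = nat \<lceil>max (max (norm p) (norm r)) (max c1 c2)\<rceil>"
    have "max (max (norm p) (norm r)) (max c1 c2) \<le> real n" unfolding n_def by (rule real_nat_ceiling_ge)
    then have "p \<in> A S n" "r \<in> A T n"
      using pr order_trans[OF pr(2)] order_trans[OF pr(3)] unfolding A_def by auto
    then show ?thesis unfolding C_def f_def pr(1) by force
  qed
  have "bounded_linear f"
    unfolding f_def
    by (intro bounded_linear_add bounded_linear_fst bounded_linear_compose[OF bounded_linear_rho1 bounded_linear_snd])
  then have "half_series_closed (C n)" for n
    unfolding C_def A_def
    by (intro bounded_linear_image_half_series_closed closed_convex_half_series_closed bounded_Times
        closed_Times convex_Times closed_Int convex_Int closed_fitzpatrick_sublevel convex_fitzpatrick_sublevel)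
      auto
  then obtain n c \<epsilon> where \<epsilon>: "\<epsilon> > 0" and ball: "ball c \<epsilon> \<subseteq> C n"
    using baire_half_series_closed[OF cover] by metis
  have on_C: "\<exists>v\<le>2 * real n + norm z * real n. (w, v) \<in> fitz_sum_epi S T z" if w: "w \<in> C n" for w
  proof -
    obtain p r where "p \<in> A S n" "r \<in> A T n" "w = p + rho1 r"
      using w unfolding C_def f_def by force
    then have pr: "w = p + rho1 r" "norm p \<le> real n"
      "fitzpatrick S p \<le> ereal (real n)" "fitzpatrick T r \<le> ereal (real n)"
      unfolding A_def by auto
    have "- blinfun_apply z (fst p) \<le> norm z * norm (fst p)"
      using norm_blinfun[of z "fst p"] by simp
    also have "\<dots> \<le> norm z * real n"
      using norm_fst_le[of "fst p" "snd p"] pr(2) by (intro mult_left_mono) auto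
    finally have "real n + real n - blinfun_apply z (fst p) \<le> 2 * real n + norm z * real n" by simp
    moreover have "(w, real n + real n - blinfun_apply z (fst p)) \<in> fitz_sum_epi S T z"
      unfolding fitz_sum_epi_def using pr by blast
    ultimately show ?thesis by blast
  qed
  show ?thesis
    by (rule that[OF \<epsilon>]) (use on_C ball in blast)
qed

lemma fitz_sum_epi_bounded_near:
  fixes S T :: "'a::banach \<Rightarrow> ('a \<Rightarrow>\<^sub>L real) set"
  assumes cq: "{p + q | p q. p \<in> dom_fitz S \<and> q \<in> rho1 ` dom_fitz T} = UNIV"
  obtains \<delta> M where "\<delta> > 0" "\<And>w. norm w < \<delta> \<Longrightarrow> \<exists>v\<le>M. ((0, z) + w, v) \<in> fitz_sum_epi S T z"
proof -
  obtain c \<epsilon> M where \<epsilon>: "\<epsilon> > 0" and ball: "\<And>w. w \<in> ball c \<epsilon> \<Longrightarrow> \<exists>v\<le>M. (w, v) \<in> fitz_sum_epi S T z"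
    by (rule fitz_sum_epi_bounded_on_ball[OF cq, where z = z]) blast
  obtain v1 where v1: "(2 *\<^sub>R (0, z) - c, v1) \<in> fitz_sum_epi S T z"
    using fitz_sum_epi_total[OF cq] by (rule exE)
  show ?thesis
  proof (rule that[of "\<epsilon> / 2" "v1 / 2 + M / 2"])
    show "\<epsilon> / 2 > 0" using \<epsilon> by simp
    show "\<exists>v\<le>v1 / 2 + M / 2. ((0, z) + w, v) \<in> fitz_sum_epi S T z" if "norm w < \<epsilon> / 2" for w
      by (rule convex_bounded_near_reflection[OF convex_fitz_sum_epi v1 ball that])
  qed
qed

lemma fitz_sum_linear_minorant:
  fixes S T :: "'a::banach \<Rightarrow> ('a \<Rightarrow>\<^sub>L real) set"
  assumes S: "maximal_monotone S" and T: "maximal_monotone T"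
    and cq: "{p + q | p q. p \<in> dom_fitz S \<and> q \<in> rho1 ` dom_fitz T} = UNIV"
  obtains l where "bounded_linear l"
    "\<And>s s' u t'. s' \<in> S s \<Longrightarrow> t' \<in> T u \<Longrightarrow>
       l (s - u, s' + t' - z) \<le> blinfun_apply s' s + blinfun_apply t' u - blinfun_apply z s"
proof -
  let ?E = "fitz_sum_epi S T z"
  let ?q = "homogenization ?E (0, z)"
  have total: "\<And>w. \<exists>v. (w, v) \<in> ?E" using fitz_sum_epi_total[OF cq] by blast
  have nonneg: "\<And>v. ((0, z), v) \<in> ?E \<Longrightarrow> 0 \<le> v" using fitz_sum_epi_nonneg[OF S T] by blast
  have q_le: "?q w \<le> v" if "((0, z) + w, v) \<in> ?E" for w v
    using homogenization_le[OF convex_fitz_sum_epi total nonneg that] .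
  have q: "sublinear ?q"
    using sublinear_homogenization[OF convex_fitz_sum_epi total nonneg] .
  obtain \<delta> M where \<delta>: "\<delta> > 0" and near: "\<And>w. norm w < \<delta> \<Longrightarrow> \<exists>v\<le>M. ((0, z) + w, v) \<in> ?E"
    using fitz_sum_epi_bounded_near[OF cq, where z = z] by blast
  have "?q w \<le> M" if w: "norm w < \<delta>" for w
  proof -
    obtain v where "v \<le> M" "((0, z) + w, v) \<in> ?E" using near[OF w] by blast
    with q_le[OF this(2)] show ?thesis by linarith
  qed
  then obtain l where l: "bounded_linear l" "\<And>w. l w \<le> ?q w"
    using bounded_linear_below_sublinear[OF q \<delta>] by blast
  have mono: "monotone_op S" "monotone_op T" using S T unfolding maximal_monotone_def by blast+
  show ?thesis
  proof (rule that[OF l(1)])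
    fix s s' u t' assume st: "s' \<in> S s" "t' \<in> T u"
    have "((0, z) + (s - u, s' + t' - z), blinfun_apply s' s + blinfun_apply t' u - blinfun_apply z s) \<in> ?E"
      using fitz_sum_epi_graph[OF mono st] by simp
    from q_le[OF this] l(2)[of "(s - u, s' + t' - z)"]
    show "l (s - u, s' + t' - z) \<le> blinfun_apply s' s + blinfun_apply t' u - blinfun_apply z s"
      by linarith
  qed
qed

lemma reflexive_bounded_linear_pair:
  fixes l :: "'a::banach \<times> ('a \<Rightarrow>\<^sub>L real) \<Rightarrow> real"
  assumes "reflexive_space TYPE('a)" and l: "bounded_linear l"
  obtains y' y where "\<And>x d. l (x, d) = blinfun_apply y' x + blinfun_apply d y"
proof -
  interpret l: bounded_linear l by (rule l)
  have l1: "bounded_linear (\<lambda>x. l (x, 0))" and l2: "bounded_linear (\<lambda>d. l (0, d))"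
    by (auto intro!: bounded_linear_compose[OF l] bounded_linear_Pair bounded_linear_ident bounded_linear_zero)
  obtain y where y: "\<And>d. l (0, d) = blinfun_apply d y"
    using assms(1) bounded_linear_Blinfun_apply[OF l2] unfolding reflexive_space_def by metis
  have "l (x, d) = blinfun_apply (Blinfun (\<lambda>x. l (x, 0))) x + blinfun_apply d y" for x d
    using l.add[of "(x, 0)" "(0, d)"] bounded_linear_Blinfun_apply[OF l1] y by simp
  then show ?thesis using that by blast
qed

theorem theorem7p2:
  fixes S T :: "'a::banach \<Rightarrow> ('a \<Rightarrow>\<^sub>L real) set"
  assumes "\<exists>x::'a. x \<noteq> 0"
    and "reflexive_space TYPE('a)"
    and "maximal_monotone S" and "maximal_monotone T"
    and "{p + q | p q. p \<in> dom_fitz S \<and> q \<in> rho1 ` dom_fitz T} = UNIV"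
  shows "(\<Union>x. op_sum S T x) = UNIV"
proof -
  have "z \<in> (\<Union>x. op_sum S T x)" for z
  proof -
    obtain l where l: "bounded_linear l" and minorant: "\<And>s s' u t'. s' \<in> S s \<Longrightarrow> t' \<in> T u \<Longrightarrow>
        l (s - u, s' + t' - z) \<le> blinfun_apply s' s + blinfun_apply t' u - blinfun_apply z s"
      using fitz_sum_linear_minorant[OF assms(3-5), where z = z] by blast
    obtain y' y where l_eq: "\<And>x d. l (x, d) = blinfun_apply y' x + blinfun_apply d y"
      using reflexive_bounded_linear_pair[OF assms(2) l] by blast
    have "0 \<le> blinfun_apply (s' - (z + y')) (s - y) + blinfun_apply (t' - (- y')) (u - y)"
      if "s' \<in> S s" "t' \<in> T u" for s s' u t'
      using minorant[OF that] unfolding l_eq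
      by (simp add: blinfun.diff_left blinfun.diff_right blinfun.add_left blinfun.minus_left algebra_simps)
    then have "z + y' \<in> S y" "- y' \<in> T y"
      using maximal_monotone_pair_memI[OF assms(3,4)] by blast+
    then have "z \<in> op_sum S T y" unfolding op_sum_def by force
    then show ?thesis by blast
  qed
  then show ?thesis by blast
qed

end
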